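(* Let $S$ be a closed (compact, connected, oriented, without boundary) surface of genus $g\ge1$ and $M$ a single point of $S$. Then every ideal triangulation of $(S,M)$ has property (T4): at the puncture at least four arcs are incident.
   Context: Arcs incident to a puncture are counted with multiplicity: an arc with both endpoints at the puncture counts twice. *)

theory Defs
  imports Main
begin

text \<open>Side (t,i) of triangle t (i < 3) runs, in the boundary orientation of t, from
  corner (t,i) to corner (t,(i+1) mod 3).  A closed surface without boundary is
  obtained by gluing the sides in pairs via a fixed-point-free involution sigma;
  gluings reverse the boundary orientation, so the surface is oriented.
  Arcs of the triangulation are the glued side pairs, punctures are the classes of
  corners, the genus is determined by the Euler characteristic.\<close>

definition tri_sides :: "nat \<Rightarrow> (nat \<times> nat) set" where
  "tri_sides n = {0..<n} \<times> {0..<3}"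

definition is_side_gluing :: "nat \<Rightarrow> (nat \<times> nat \<Rightarrow> nat \<times> nat) \<Rightarrow> bool" where
  "is_side_gluing n \<sigma> \<longleftrightarrow>
     (\<forall>s\<in>tri_sides n. \<sigma> s \<in> tri_sides n \<and> \<sigma> s \<noteq> s \<and> \<sigma> (\<sigma> s) = s)"

text \<open>Identification of corners induced by the (orientation-reversing) gluing.\<close>
definition corner_rel :: "nat \<Rightarrow> (nat \<times> nat \<Rightarrow> nat \<times> nat) \<Rightarrow> ((nat \<times> nat) \<times> (nat \<times> nat)) set" where
  "corner_rel n \<sigma> =
     {((t, i), (t', (j + 1) mod 3)) | t i t' j. (t, i) \<in> tri_sides n \<and> \<sigma> (t, i) = (t', j)}
   \<union> {((t, (i + 1) mod 3), (t', j)) | t i t' j. (t, i) \<in> tri_sides n \<and> \<sigma> (t, i) = (t', j)}"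

definition punctures :: "nat \<Rightarrow> (nat \<times> nat \<Rightarrow> nat \<times> nat) \<Rightarrow> (nat \<times> nat) set set" where
  "punctures n \<sigma> = tri_sides n // ((corner_rel n \<sigma> \<union> (corner_rel n \<sigma>)\<inverse>)\<^sup>*)"

definition tri_arcs :: "nat \<Rightarrow> (nat \<times> nat \<Rightarrow> nat \<times> nat) \<Rightarrow> (nat \<times> nat) set set" where
  "tri_arcs n \<sigma> = {{s, \<sigma> s} | s. s \<in> tri_sides n}"

definition tri_adjacent :: "nat \<Rightarrow> (nat \<times> nat \<Rightarrow> nat \<times> nat) \<Rightarrow> (nat \<times> nat) set" where
  "tri_adjacent n \<sigma> = {(t, fst (\<sigma> (t, i))) | t i. (t, i) \<in> tri_sides n}"

definition surface_connected :: "nat \<Rightarrow> (nat \<times> nat \<Rightarrow> nat \<times> nat) \<Rightarrow> bool" where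
  "surface_connected n \<sigma> \<longleftrightarrow>
     (\<forall>t\<in>{0..<n}. \<forall>t'\<in>{0..<n}. (t, t') \<in> (tri_adjacent n \<sigma>)\<^sup>*)"

definition ideal_triangulation :: "nat \<Rightarrow> (nat \<times> nat \<Rightarrow> nat \<times> nat) \<Rightarrow> nat \<Rightarrow> nat \<Rightarrow> bool" where
  "ideal_triangulation n \<sigma> g m \<longleftrightarrow>
     is_side_gluing n \<sigma> \<and> surface_connected n \<sigma> \<and>
     card (punctures n \<sigma>) = m \<and>
     int (card (punctures n \<sigma>)) - int (card (tri_arcs n \<sigma>)) + int n = 2 - 2 * int g"

text \<open>Number of arcs incident to puncture v, counted with multiplicity: each arc
  {s, sigma s} has its two endpoints at the starting corners of s and of sigma s,
  so this is the number of sides whose starting corner lies in v.\<close>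
definition incident_arcs :: "nat \<Rightarrow> (nat \<times> nat \<Rightarrow> nat \<times> nat) \<Rightarrow> (nat \<times> nat) set \<Rightarrow> nat" where
  "incident_arcs n \<sigma> v = card {s \<in> tri_sides n. s \<in> v}"

definition property_T4 :: "nat \<Rightarrow> (nat \<times> nat \<Rightarrow> nat \<times> nat) \<Rightarrow> bool" where
  "property_T4 n \<sigma> \<longleftrightarrow> (\<forall>v\<in>punctures n \<sigma>. incident_arcs n \<sigma> v \<ge> 4)"

end

theory Submission
  imports Defs
begin

text \<open>With a single puncture every corner lies at it, so its valence is the number 3n of
  triangle sides. The gluing pairs these sides off, hence 3n is even, and n > 0 since a
  puncture exists; thus the valence is at least 6.\<close>

lemma even_card_fixpoint_free_involution:
  assumes "finite A" and "\<forall>x\<in>A. f x \<in> A \<and> f x \<noteq> x \<and> f (f x) = x"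
  shows "even (card A)"
  using assms
proof (induction "card A" arbitrary: A rule: less_induct)
  case less
  show ?case
  proof (cases "A = {}")
    case False
    then obtain x where x: "x \<in> A" by blast
    let ?B = "A - {x, f x}"
    have pair: "{x, f x} \<subseteq> A" "f x \<noteq> x"
      using less.prems(2) x by auto
    have invariant: "\<forall>y\<in>?B. f y \<in> ?B \<and> f y \<noteq> y \<and> f (f y) = y"
      using less.prems(2) x by (metis Diff_iff insertCI insertE singletonD)
    have card_B: "card ?B = card A - 2"
      using less.prems(1) pair by (simp add: card_Diff_subset)
    have "card A \<ge> 2"
      using card_mono[OF less.prems(1) pair(1)] pair(2) by simp
    then have "even (card ?B)"
      using less.hyps[of ?B] less.prems(1) invariant card_B by simp
    with card_B \<open>card A \<ge> 2\<close> show ?thesis by simp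
  qed simp
qed

lemma card_tri_sides: "card (tri_sides n) = 3 * n"
  unfolding tri_sides_def by (simp add: card_cartesian_product)

lemma even_triangle_count:
  assumes "is_side_gluing n \<sigma>"
  shows "even n"
proof -
  have "even (card (tri_sides n))"
    using assms unfolding is_side_gluing_def
    by (intro even_card_fixpoint_free_involution) (simp_all add: tri_sides_def)
  then show ?thesis by (simp add: card_tri_sides)
qed

lemma tri_sides_subset_unique_puncture:
  assumes "punctures n \<sigma> = {v}"
  shows "tri_sides n \<subseteq> v"
proof
  let ?R = "(corner_rel n \<sigma> \<union> (corner_rel n \<sigma>)\<inverse>)\<^sup>*"
  fix x assume "x \<in> tri_sides n"
  then have "?R `` {x} \<in> punctures n \<sigma>"
    unfolding punctures_def by (rule quotientI)
  then show "x \<in> v" using assms by auto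
qed

lemma incident_arcs_unique_puncture:
  assumes "punctures n \<sigma> = {v}"
  shows "incident_arcs n \<sigma> v = 3 * n"
proof -
  have "{s \<in> tri_sides n. s \<in> v} = tri_sides n"
    using tri_sides_subset_unique_puncture[OF assms] by auto
  then show ?thesis by (simp add: incident_arcs_def card_tri_sides)
qed

theorem lemma5p3:
  fixes n g :: nat and \<sigma> :: "nat \<times> nat \<Rightarrow> nat \<times> nat"
  assumes "g \<ge> 1"
    and "ideal_triangulation n \<sigma> g 1"
  shows "property_T4 n \<sigma>"
proof -
  have gluing: "is_side_gluing n \<sigma>" and "card (punctures n \<sigma>) = 1"
    using assms(2) unfolding ideal_triangulation_def by auto
  then obtain v where v: "punctures n \<sigma> = {v}"
    using card_1_singletonE by blast
  have "n \<noteq> 0"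
  proof
    assume "n = 0"
    then have "punctures n \<sigma> = {}" by (simp add: punctures_def tri_sides_def)
    with v show False by simp
  qed
  moreover have "even n"
    using gluing by (rule even_triangle_count)
  ultimately have "n \<ge> 2" by presburger
  then show ?thesis
    unfolding property_T4_def using incident_arcs_unique_puncture[OF v] v by simp
qed

end
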